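(* Assume $S^t(\mu,\nu)>0$ and let $X$ be $F^t$ conditioned on $F^t_{t+1}=r$. Then $D(X\,\|\,F^t)=D(X\,\|\,B^t)=-\log S^t(\mu,\nu)$.
   Context: $\Omega$ is a finite set, $S$ a symmetric substochastic matrix on $\Omega$ with nonnegative entries, $u,v$ nonnegative vectors on $\Omega$ with $\|u\|_2=\|v\|_2=1$, $\mu=u/\|u\|_1$, $\nu=v/\|v\|_1$, $t$ a positive integer, $S^t(\mu,\nu)=\sum_{x,y}\mu(x)S^t(x,y)\nu(y)$. Let $\Omega_\circ=\Omega\cup\{r\}$, $r\notin\Omega$, fix $z_0\in\Omega$. $F^t$ is the sub-probability measure on $\Omega_\circ^{\{-1,\ldots,t+1\}}$ with $\Pr[F^t=w]=\mu(w_0)\prod_{i=1}^tS(w_{i-1},w_i)\,c(w)$ for $w_{-1}=r$, $w_0,\ldots,w_t\in\Omega$, where $c(w)=\nu(w_t)$ if $w_{t+1}=r$, $c(w)=1-\nu(w_t)$ if $w_{t+1}=z_0$, and 0 otherwise. $B^t$ has $\Pr[B^t=w]=\nu(w_t)\prod_{i=1}^tS(w_i,w_{i-1})\,c'(w)$ for $w_{t+1}=r$, $w_0,\ldots,w_t\in\Omega$, with $c'(w)=\mu(w_0)$ if $w_{-1}=r$, $c'(w)=1-\mu(w_0)$ if $w_{-1}=z_0$, and 0 otherwise. $X$ has $\Pr[X=w]=\Pr[F^t=w]/S^t(\mu,\nu)$ for $w_{t+1}=r$. For nonnegative functions $p,q$ on a countable set, $D(p\|q)=\sum_x p(x)\log\frac{p(x)}{q(x)}$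 (terms with $p(x)=0$ are 0; log base 2); for random variables, $D(X\|Y)$ is the divergence of their distribution functions. *)

theory Defs
  imports "HOL-Analysis.Analysis" "HOL-Library.FuncSet"
begin

(* Walks w_{-1},...,w_{t+1} are represented as extensional functions int => 'a on {-1..t+1}. *)

definition normalize1 :: "'a set \<Rightarrow> ('a \<Rightarrow> real) \<Rightarrow> 'a \<Rightarrow> real" where
  "normalize1 Om u x = u x / (\<Sum>y\<in>Om. \<bar>u y\<bar>)"

fun matpow :: "'a set \<Rightarrow> ('a \<Rightarrow> 'a \<Rightarrow> real) \<Rightarrow> nat \<Rightarrow> 'a \<Rightarrow> 'a \<Rightarrow> real" where
  "matpow Om S 0 x y = (if x = y then 1 else 0)"
| "matpow Om S (Suc n) x y = (\<Sum>z\<in>Om. matpow Om S n x z * S z y)"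

definition bilin :: "'a set \<Rightarrow> ('a \<Rightarrow> 'a \<Rightarrow> real) \<Rightarrow> nat \<Rightarrow> ('a \<Rightarrow> real) \<Rightarrow> ('a \<Rightarrow> real) \<Rightarrow> real" where
  "bilin Om S t mu nu = (\<Sum>x\<in>Om. \<Sum>y\<in>Om. mu x * matpow Om S t x y * nu y)"

definition walks :: "'a set \<Rightarrow> 'a \<Rightarrow> nat \<Rightarrow> (int \<Rightarrow> 'a) set" where
  "walks Om r t = PiE {-1..int t + 1} (\<lambda>_. insert r Om)"

definition Fwalk :: "'a set \<Rightarrow> ('a \<Rightarrow> 'a \<Rightarrow> real) \<Rightarrow> ('a \<Rightarrow> real) \<Rightarrow> ('a \<Rightarrow> real)
    \<Rightarrow> 'a \<Rightarrow> 'a \<Rightarrow> nat \<Rightarrow> (int \<Rightarrow> 'a) \<Rightarrow> real" where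
  "Fwalk Om S mu nu r z0 t w =
     (if w (-1) = r \<and> (\<forall>i\<in>{0..int t}. w i \<in> Om) then
        mu (w 0) * (\<Prod>i\<in>{1..int t}. S (w (i - 1)) (w i)) *
        (if w (int t + 1) = r then nu (w (int t))
         else if w (int t + 1) = z0 then 1 - nu (w (int t)) else 0)
      else 0)"

definition Bwalk :: "'a set \<Rightarrow> ('a \<Rightarrow> 'a \<Rightarrow> real) \<Rightarrow> ('a \<Rightarrow> real) \<Rightarrow> ('a \<Rightarrow> real)
    \<Rightarrow> 'a \<Rightarrow> 'a \<Rightarrow> nat \<Rightarrow> (int \<Rightarrow> 'a) \<Rightarrow> real" where
  "Bwalk Om S mu nu r z0 t w =
     (if w (int t + 1) = r \<and> (\<forall>i\<in>{0..int t}. w i \<in> Om) then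
        nu (w (int t)) * (\<Prod>i\<in>{1..int t}. S (w i) (w (i - 1))) *
        (if w (-1) = r then mu (w 0)
         else if w (-1) = z0 then 1 - mu (w 0) else 0)
      else 0)"

definition Xwalk :: "'a set \<Rightarrow> ('a \<Rightarrow> 'a \<Rightarrow> real) \<Rightarrow> ('a \<Rightarrow> real) \<Rightarrow> ('a \<Rightarrow> real)
    \<Rightarrow> 'a \<Rightarrow> 'a \<Rightarrow> nat \<Rightarrow> (int \<Rightarrow> 'a) \<Rightarrow> real" where
  "Xwalk Om S mu nu r z0 t w =
     (if w (int t + 1) = r then Fwalk Om S mu nu r z0 t w / bilin Om S t mu nu else 0)"

definition KLdiv :: "'b set \<Rightarrow> ('b \<Rightarrow> real) \<Rightarrow> ('b \<Rightarrow> real) \<Rightarrow> real" where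
  "KLdiv A p q = (\<Sum>x\<in>A. if p x = 0 then 0 else p x * log 2 (p x / q x))"

end

theory Submission imports Defs begin

text \<open>On the event \<open>w\<^sub>t\<^sub>+\<^sub>1 = r\<close> the conditioned walk \<open>X\<close> equals \<open>F\<^sup>t / S\<^sup>t(\<mu>,\<nu>)\<close>, and by
  symmetry of \<open>S\<close> the backward walk \<open>B\<^sup>t\<close> gives every such walk the same weight as \<open>F\<^sup>t\<close>.
  Hence \<open>log (X / F\<^sup>t)\<close> and \<open>log (X / B\<^sup>t)\<close> are the constant \<open>- log S\<^sup>t(\<mu>,\<nu>)\<close> on the
  support of \<open>X\<close>, and both divergences equal it because \<open>X\<close> has total mass one.
  That mass is one since summing the path weights over the interior of the walk
  reproduces the bilinear form \<open>S\<^sup>t(\<mu>,\<nu>)\<close>.\<close>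

lemma sum_PiE_insert:
  assumes "a \<notin> A"
  shows "(\<Sum>w\<in>PiE (insert a A) T. f w) = (\<Sum>y\<in>T a. \<Sum>g\<in>PiE A T. f (g(a:=y)))"
proof -
  have "(\<Sum>w\<in>PiE (insert a A) T. f w) = (\<Sum>p\<in>T a \<times> PiE A T. f ((\<lambda>(y, g). g(a := y)) p))"
    unfolding PiE_insert_eq by (subst sum.reindex[OF inj_combinator[OF assms(1)]]) (simp add: o_def)
  also have "\<dots> = (\<Sum>y\<in>T a. \<Sum>g\<in>PiE A T. f (g(a:=y)))"
    unfolding sum.cartesian_product by (simp add: case_prod_unfold)
  finally show ?thesis .
qed

definition path_weight :: "('a \<Rightarrow> real) \<Rightarrow> ('a \<Rightarrow> 'a \<Rightarrow> real) \<Rightarrow> nat \<Rightarrow> (int \<Rightarrow> 'a) \<Rightarrow> real" where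
  "path_weight mu S n w = mu (w 0) * (\<Prod>i\<in>{1..int n}. S (w (i - 1)) (w i))"

lemma path_weight_Suc_upd:
  "path_weight mu S (Suc n) (w(1 + int n := y)) = path_weight mu S n w * S (w (int n)) y"
proof -
  have "(\<Prod>i\<in>{1..int (Suc n)}. S ((w(1 + int n := y)) (i - 1)) ((w(1 + int n := y)) i))
      = S (w (int n)) y * (\<Prod>i\<in>{1..int n}. S ((w(1 + int n := y)) (i - 1)) ((w(1 + int n := y)) i))"
    by (simp add: atLeastAtMostPlus1_int_conv)
  also have "(\<Prod>i\<in>{1..int n}. S ((w(1 + int n := y)) (i - 1)) ((w(1 + int n := y)) i))
      = (\<Prod>i\<in>{1..int n}. S (w (i - 1)) (w i))"
    by (intro prod.cong) auto
  finally show ?thesis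
    unfolding path_weight_def by simp
qed

lemma sum_path_weight_eq_matpow:
  assumes "finite Om"
  shows "(\<Sum>w\<in>PiE {0..int n} (\<lambda>_. Om). path_weight mu S n w * g (w (int n)))
       = (\<Sum>x\<in>Om. \<Sum>y\<in>Om. mu x * matpow Om S n x y * g y)"
proof (induction n arbitrary: g)
  case 0
  have "{0..int 0} = insert 0 {}" by auto
  moreover have "(\<Sum>y\<in>Om. mu x * (if x = y then 1 else 0) * g y) = mu x * g x" if "x \<in> Om" for x
    using that assms by (simp add: if_distrib if_distribR cong: if_cong)
  ultimately show ?case
    by (simp add: sum_PiE_insert path_weight_def)
next
  case (Suc n)
  have "{0..int (Suc n)} = insert (1 + int n) {0..int n}" by auto
  then have "(\<Sum>w\<in>PiE {0..int (Suc n)} (\<lambda>_. Om). path_weight mu S (Suc n) w * g (w (int (Suc n))))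
      = (\<Sum>y\<in>Om. \<Sum>w\<in>PiE {0..int n} (\<lambda>_. Om). path_weight mu S n w * (S (w (int n)) y * g y))"
    by (simp add: sum_PiE_insert path_weight_Suc_upd mult.assoc)
  also have "\<dots> = (\<Sum>w\<in>PiE {0..int n} (\<lambda>_. Om). path_weight mu S n w * (\<Sum>y\<in>Om. S (w (int n)) y * g y))"
    by (subst sum.swap) (simp add: sum_distrib_left)
  also have "\<dots> = (\<Sum>x\<in>Om. \<Sum>z\<in>Om. mu x * matpow Om S n x z * (\<Sum>y\<in>Om. S z y * g y))"
    by (rule Suc.IH)
  also have "\<dots> = (\<Sum>x\<in>Om. \<Sum>z\<in>Om. \<Sum>y\<in>Om. mu x * matpow Om S n x z * S z y * g y)"
    by (simp add: sum_distrib_left mult.assoc)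
  also have "\<dots> = (\<Sum>x\<in>Om. \<Sum>y\<in>Om. \<Sum>z\<in>Om. mu x * matpow Om S n x z * S z y * g y)"
    by (rule sum.cong[OF refl], rule sum.swap)
  also have "\<dots> = (\<Sum>x\<in>Om. \<Sum>y\<in>Om. mu x * matpow Om S (Suc n) x y * g y)"
    by (simp add: sum_distrib_left sum_distrib_right mult.assoc)
  finally show ?case .
qed

definition close_walk :: "'a \<Rightarrow> nat \<Rightarrow> (int \<Rightarrow> 'a) \<Rightarrow> int \<Rightarrow> 'a" where
  "close_walk r t w = (\<lambda>i. if i = -1 \<or> i = int t + 1 then r else w i)"

lemma close_walk_ends [simp]:
  "close_walk r t w (-1) = r" "close_walk r t w (int t + 1) = r"
  by (simp_all add: close_walk_def)

lemma close_walk_in_walks: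
  assumes "w \<in> PiE {0..int t} (\<lambda>_. Om)"
  shows "close_walk r t w \<in> walks Om r t"
  using assms unfolding walks_def close_walk_def by (auto simp: PiE_iff extensional_def)

lemma inj_on_close_walk: "inj_on (close_walk r t) (PiE {0..int t} (\<lambda>_. Om))"
proof
  fix a c
  assume a: "a \<in> PiE {0..int t} (\<lambda>_. Om)" and c: "c \<in> PiE {0..int t} (\<lambda>_. Om)"
    and eq: "close_walk r t a = close_walk r t c"
  show "a = c"
  proof (rule PiE_ext[OF a c])
    fix i
    assume "i \<in> {0..int t}"
    then show "a i = c i"
      using fun_cong[OF eq, of i] by (simp add: close_walk_def)
  qed
qed

lemma walk_eq_close_walk_restrict:
  assumes "w \<in> walks Om r t" "w (-1) = r" "w (int t + 1) = r"
  shows "w = close_walk r t (restrict w {0..int t})"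
  using assms unfolding walks_def close_walk_def by (auto simp: fun_eq_iff PiE_iff extensional_def)

lemma Fwalk_close_walk:
  assumes "w \<in> PiE {0..int t} (\<lambda>_. Om)"
  shows "Fwalk Om S mu nu r z0 t (close_walk r t w) = path_weight mu S t w * nu (w (int t))"
proof -
  have inner: "close_walk r t w i = w i" if "i \<in> {0..int t}" for i
    using that by (simp add: close_walk_def)
  have "\<forall>i\<in>{0..int t}. close_walk r t w i \<in> Om"
    using assms inner by auto
  moreover have "(\<Prod>i\<in>{1..int t}. S (close_walk r t w (i - 1)) (close_walk r t w i))
      = (\<Prod>i\<in>{1..int t}. S (w (i - 1)) (w i))"
    by (intro prod.cong) (simp_all add: inner)
  ultimately show ?thesis
    unfolding Fwalk_def path_weight_def by (simp add: inner)
qed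

lemma sum_Fwalk_returning:
  assumes "finite Om" "r \<notin> Om"
  shows "(\<Sum>w\<in>walks Om r t. if w (int t + 1) = r then Fwalk Om S mu nu r z0 t w else 0)
       = bilin Om S t mu nu"
proof -
  let ?P = "PiE {0..int t} (\<lambda>_. Om)"
  let ?f = "\<lambda>w. if w (int t + 1) = r then Fwalk Om S mu nu r z0 t w else 0"
  have vanish: "?f w = 0" if "w \<in> walks Om r t - close_walk r t ` ?P" for w
  proof (rule ccontr)
    assume "?f w \<noteq> 0"
    then have ends: "w (-1) = r" "w (int t + 1) = r" and inner: "\<forall>i\<in>{0..int t}. w i \<in> Om"
      unfolding Fwalk_def by (auto split: if_splits)
    have "restrict w {0..int t} \<in> ?P" using inner by auto
    then show False
      using that walk_eq_close_walk_restrict[OF _ ends] by blast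
  qed
  have "finite (walks Om r t)"
    unfolding walks_def using assms(1) by (simp add: finite_PiE)
  moreover have "close_walk r t ` ?P \<subseteq> walks Om r t"
    by (rule image_subsetI) (rule close_walk_in_walks)
  ultimately have "(\<Sum>w\<in>walks Om r t. ?f w) = (\<Sum>w\<in>close_walk r t ` ?P. ?f w)"
    by (rule sum.mono_neutral_right) (use vanish in blast)
  also have "\<dots> = (\<Sum>w\<in>?P. ?f (close_walk r t w))"
    by (rule sum.reindex_cong[OF inj_on_close_walk refl refl])
  also have "\<dots> = (\<Sum>w\<in>?P. path_weight mu S t w * nu (w (int t)))"
    by (intro sum.cong refl) (simp add: Fwalk_close_walk)
  also have "\<dots> = bilin Om S t mu nu"
    unfolding sum_path_weight_eq_matpow[OF assms(1)] bilin_def ..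
  finally show ?thesis .
qed

lemma sum_Xwalk:
  assumes "finite Om" "r \<notin> Om" "bilin Om S t mu nu \<noteq> 0"
  shows "(\<Sum>w\<in>walks Om r t. Xwalk Om S mu nu r z0 t w) = 1"
proof -
  have "(\<Sum>w\<in>walks Om r t. Xwalk Om S mu nu r z0 t w)
      = (\<Sum>w\<in>walks Om r t. if w (int t + 1) = r then Fwalk Om S mu nu r z0 t w else 0)
          / bilin Om S t mu nu"
    unfolding Xwalk_def sum_divide_distrib by (intro sum.cong) auto
  then show ?thesis
    using assms by (simp add: sum_Fwalk_returning)
qed

lemma Xwalk_nonzeroD:
  assumes "Xwalk Om S mu nu r z0 t w \<noteq> 0"
  shows "w (-1) = r" "w (int t + 1) = r" "\<forall>i\<in>{0..int t}. w i \<in> Om"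
  using assms unfolding Xwalk_def Fwalk_def by (auto split: if_splits)

lemma Fwalk_eq_bilin_mult_Xwalk:
  assumes "bilin Om S t mu nu \<noteq> 0" "w (int t + 1) = r"
  shows "Fwalk Om S mu nu r z0 t w = bilin Om S t mu nu * Xwalk Om S mu nu r z0 t w"
  using assms unfolding Xwalk_def by simp

lemma Bwalk_eq_Fwalk:
  assumes "\<And>x y. x \<in> Om \<Longrightarrow> y \<in> Om \<Longrightarrow> S x y = S y x"
    and "w (-1) = r" "w (int t + 1) = r" "\<forall>i\<in>{0..int t}. w i \<in> Om"
  shows "Bwalk Om S mu nu r z0 t w = Fwalk Om S mu nu r z0 t w"
proof -
  have "(\<Prod>i\<in>{1..int t}. S (w i) (w (i - 1))) = (\<Prod>i\<in>{1..int t}. S (w (i - 1)) (w i))"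
    using assms(1,4) by (intro prod.cong) auto
  then show ?thesis
    using assms(2-4) unfolding Bwalk_def Fwalk_def by (simp add: ac_simps)
qed

lemma KLdiv_eq_of_proportional:
  assumes "sum p A = 1" "c > 0" "\<And>x. x \<in> A \<Longrightarrow> p x \<noteq> 0 \<Longrightarrow> q x = c * p x"
  shows "KLdiv A p q = - log 2 c"
proof -
  have "KLdiv A p q = (\<Sum>x\<in>A. p x * - log 2 c)"
    unfolding KLdiv_def
    using assms(2,3) by (intro sum.cong) (auto simp: log_divide)
  also have "\<dots> = - log 2 c"
    using assms(1) by (simp add: sum_negf flip: sum_distrib_right)
  finally show ?thesis .
qed

text \<open>Only finiteness, \<open>r \<notin> \<Omega>\<close>, symmetry of \<open>S\<close> and \<open>S\<^sup>t(\<mu>,\<nu>) > 0\<close> are needed.\<close>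

theorem lemma3p3:
  fixes Om :: "'a set" and S :: "'a \<Rightarrow> 'a \<Rightarrow> real" and u v :: "'a \<Rightarrow> real"
    and r z0 :: 'a and t :: nat
  assumes "finite Om" and "r \<notin> Om" and "z0 \<in> Om"
    and "\<And>x y. x \<in> Om \<Longrightarrow> y \<in> Om \<Longrightarrow> S x y \<ge> 0"
    and "\<And>x y. x \<in> Om \<Longrightarrow> y \<in> Om \<Longrightarrow> S x y = S y x"
    and "\<And>x. x \<in> Om \<Longrightarrow> (\<Sum>y\<in>Om. S x y) \<le> 1"
    and "\<And>x. x \<in> Om \<Longrightarrow> u x \<ge> 0" and "\<And>x. x \<in> Om \<Longrightarrow> v x \<ge> 0"
    and "sqrt (\<Sum>x\<in>Om. (u x)^2) = 1" and "sqrt (\<Sum>x\<in>Om. (v x)^2) = 1"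
    and "t > 0"
    and "bilin Om S t (normalize1 Om u) (normalize1 Om v) > 0"
  shows "KLdiv (walks Om r t) (Xwalk Om S (normalize1 Om u) (normalize1 Om v) r z0 t)
             (Fwalk Om S (normalize1 Om u) (normalize1 Om v) r z0 t)
           = - log 2 (bilin Om S t (normalize1 Om u) (normalize1 Om v))
         \<and> KLdiv (walks Om r t) (Xwalk Om S (normalize1 Om u) (normalize1 Om v) r z0 t)
             (Bwalk Om S (normalize1 Om u) (normalize1 Om v) r z0 t)
           = - log 2 (bilin Om S t (normalize1 Om u) (normalize1 Om v))"
proof -
  define mu nu where "mu = normalize1 Om u" and "nu = normalize1 Om v"
  define b where "b = bilin Om S t mu nu"
  have b_pos: "b > 0" using assms(12) unfolding b_def mu_def nu_def .
  have X_sum: "(\<Sum>w\<in>walks Om r t. Xwalk Om S mu nu r z0 t w) = 1"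
    using sum_Xwalk[OF assms(1,2)] b_pos unfolding b_def by simp
  have F_prop: "Fwalk Om S mu nu r z0 t w = b * Xwalk Om S mu nu r z0 t w"
    if "Xwalk Om S mu nu r z0 t w \<noteq> 0" for w
    using b_pos Xwalk_nonzeroD(2)[OF that] unfolding b_def by (simp add: Fwalk_eq_bilin_mult_Xwalk)
  have B_prop: "Bwalk Om S mu nu r z0 t w = b * Xwalk Om S mu nu r z0 t w"
    if "Xwalk Om S mu nu r z0 t w \<noteq> 0" for w
    using Bwalk_eq_Fwalk[OF assms(5) Xwalk_nonzeroD[OF that]] F_prop[OF that] by simp
  have "KLdiv (walks Om r t) (Xwalk Om S mu nu r z0 t) (Fwalk Om S mu nu r z0 t) = - log 2 b"
    using F_prop by (rule KLdiv_eq_of_proportional[OF X_sum b_pos])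
  moreover have "KLdiv (walks Om r t) (Xwalk Om S mu nu r z0 t) (Bwalk Om S mu nu r z0 t) = - log 2 b"
    using B_prop by (rule KLdiv_eq_of_proportional[OF X_sum b_pos])
  ultimately show ?thesis unfolding mu_def nu_def b_def by simp
qed

end
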